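(* Let $U\subset\mathbb{R}^2$ be open, let $x:U\to\mathbb{R}^3$ be smooth, let $\xi:U\to S^2$ be a proper frontal such that the line congruence $\{x,\xi\}$ is normal, and let $\Omega$ be a tangent moving basis of $\xi$ with $D\xi=\Omega\Delta_\Omega^T$ and $\delta_\Omega=\det\Delta_\Omega$. Then the equation of principal surfaces is a multiple by $\delta_\Omega$ of the equation of developable surfaces; more precisely, $$\Delta_\Omega\,\mathbf{P}\,\mathrm{adj}(\boldsymbol{\mathcal{II}}_\Omega)^T\Delta_\Omega\,\boldsymbol{\mathcal{I}}_\Omega\,\Delta_\Omega^T=\delta_\Omega\,\mathbf{P}\,\mathrm{adj}(\boldsymbol{\mathcal{II}}_\Omega)\,\boldsymbol{\mathcal{I}}_\Omega\,\Delta_\Omega^T\quad\text{on }U,$$ where $\mathbf{P}=\begin{pmatrix}0&1\\-1&0\end{pmatrix}$.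
   Context: A frontal is a smooth map $f:U\to\mathbb{R}^3$ admitting locally a smooth unit vector field orthogonal to $f_{u_1},f_{u_2}$; proper means its singular set $\Sigma(f)$ (points where $f$ is not immersive) has empty interior. A tangent moving basis of $\xi$ is a smooth $\Omega=(w_1\ w_2):U\to M_{3\times2}(\mathbb{R})$ with linearly independent columns whose span contains $\xi_{u_1},\xi_{u_2}$; then $D\xi=\Omega\Delta_\Omega^T$ for a unique smooth $\Delta_\Omega$ and $\Sigma(\xi)=\delta_\Omega^{-1}(0)$. $\boldsymbol{\mathcal{I}}_\Omega=\Omega^T\Omega$, $\boldsymbol{\mathcal{II}}_\Omega=-\Omega^TDx$, $\mathrm{adj}$ is the adjugate. The congruence $\{x,\xi\}$ (lines through $x(u)$ in direction $\xi(u)$) is normal if there is a surface $S'$ whose normal lines are parallel to the lines of the congruence. For a curve $(u_1(t),u_2(t))$ in $U$, the equation of principal surfaces of a normal congruence is $(u_1',u_2')\,\Delta_\Omega\mathbf{P}\,\mathrm{adj}(\boldsymbol{\mathcal{II}}_\Omega)^T\Delta_\Omega\boldsymbol{\mathcal{I}}_\Omega\Delta_\Omega^T(u_1',u_2')^T=0$ (its solutions are the curves whose congruence surfaces $x+v\xi$ have, wherever $\Delta_\Omega^T(u_1',u_2')^T\neq0$, velocity direction extremizing $b\mapsto \frac{b^T\boldsymbol{\mathcal{II}}_\Omega\mathrm{adj}(\Delta_\Omega^T)b}{b^T\boldsymbol{\mathcal{I}}_\Omega b}$), and the equation of developable surfaces is $(u_1',u_2')\,\mathbf{P}\,\mathrm{adj}(\boldsymbol{\mathcal{II}}_\Omega)\boldsymbol{\mathcal{I}}_\Omega\Delta_\Omega^T(u_1',u_2')^T=0$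 (its solutions are the curves whose congruence surfaces are developable). *)

theory Defs
  imports "HOL-Analysis.Analysis"
begin

definition partial :: "(real^'n \<Rightarrow> 'b::real_normed_vector) \<Rightarrow> 'n \<Rightarrow> real^'n \<Rightarrow> 'b" where
  "partial f i u = frechet_derivative f (at u) (axis i 1)"

definition jac :: "(real^'n \<Rightarrow> real^'m) \<Rightarrow> real^'n \<Rightarrow> real^'n^'m" where
  "jac f u = (\<chi> r c. partial f c u $ r)"

fun Ck_on :: "nat \<Rightarrow> (real^'n \<Rightarrow> 'b::real_normed_vector) \<Rightarrow> (real^'n) set \<Rightarrow> bool" where
  "Ck_on 0 f U = continuous_on U f"
| "Ck_on (Suc k) f U = ((\<forall>u\<in>U. f differentiable (at u)) \<and> (\<forall>i. Ck_on k (partial f i) U))"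

definition smooth_on :: "(real^'n \<Rightarrow> 'b::real_normed_vector) \<Rightarrow> (real^'n) set \<Rightarrow> bool" where
  "smooth_on f U = (\<forall>k. Ck_on k f U)"

definition frontal :: "(real^2 \<Rightarrow> real^3) \<Rightarrow> (real^2) set \<Rightarrow> bool" where
  "frontal f U = (smooth_on f U \<and>
     (\<forall>u\<in>U. \<exists>V \<nu>. open V \<and> u \<in> V \<and> V \<subseteq> U \<and> smooth_on \<nu> V \<and>
        (\<forall>v\<in>V. norm (\<nu> v) = 1 \<and> (\<forall>i. \<nu> v \<bullet> partial f i v = 0))))"

definition singular_set :: "(real^2 \<Rightarrow> real^3) \<Rightarrow> (real^2) set \<Rightarrow> (real^2) set" where
  "singular_set f U = {u\<in>U. \<not> inj (frechet_derivative f (at u))}"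

definition proper_frontal :: "(real^2 \<Rightarrow> real^3) \<Rightarrow> (real^2) set \<Rightarrow> bool" where
  "proper_frontal f U = (frontal f U \<and> interior (singular_set f U) = {})"

definition tangent_moving_basis :: "(real^2 \<Rightarrow> real^3) \<Rightarrow> (real^2) set \<Rightarrow> (real^2 \<Rightarrow> real^2^3) \<Rightarrow> bool" where
  "tangent_moving_basis f U \<Omega> = (smooth_on \<Omega> U \<and>
     (\<forall>u\<in>U. (\<forall>c. \<Omega> u *v c = 0 \<longrightarrow> c = 0) \<and>
            (\<forall>i. partial f i u \<in> span {column 1 (\<Omega> u), column 2 (\<Omega> u)})))"

text \<open>Normal line congruence {x, xi}: there is a surface S' = x + lambda xi (lambda smooth)
  whose normal lines are parallel to xi, i.e. xi is orthogonal to the partials of S'.\<close>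
definition normal_congruence :: "(real^2 \<Rightarrow> real^3) \<Rightarrow> (real^2 \<Rightarrow> real^3) \<Rightarrow> (real^2) set \<Rightarrow> bool" where
  "normal_congruence x \<xi> U = (\<exists>lam::real^2 \<Rightarrow> real. smooth_on lam U \<and>
     (\<forall>u\<in>U. \<forall>i. \<xi> u \<bullet> partial (\<lambda>v. x v + lam v *\<^sub>R \<xi> v) i u = 0))"

definition adj2 :: "real^2^2 \<Rightarrow> real^2^2" where
  "adj2 A = (\<chi> i j. if i = 1 \<and> j = 1 then A $ 2 $ 2
                 else if i = 1 \<and> j = 2 then - A $ 1 $ 2
                 else if i = 2 \<and> j = 1 then - A $ 2 $ 1
                 else A $ 1 $ 1)"

definition Pmat :: "real^2^2" where
  "Pmat = (\<chi> i j. if i = 1 \<and> j = 2 then 1 else if i = 2 \<and> j = 1 then -1 else 0)"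

definition first_ff :: "(real^2 \<Rightarrow> real^2^3) \<Rightarrow> real^2 \<Rightarrow> real^2^2" where
  "first_ff \<Omega> u = transpose (\<Omega> u) ** \<Omega> u"

definition second_ff :: "(real^2 \<Rightarrow> real^2^3) \<Rightarrow> (real^2 \<Rightarrow> real^3) \<Rightarrow> real^2 \<Rightarrow> real^2^2" where
  "second_ff \<Omega> x u = - (transpose (\<Omega> u) ** jac x u)"

end

theory Submission
  imports Defs
begin

(*
  Normality of the congruence says that the 1-form \<xi> \<bullet> dx is exact, equal to -d\<lambda>.
  Differentiating once more and using the symmetry of second derivatives of x and \<lambda>
  shows that d\<xi>\<^sup>T dx = -\<Delta> II is a symmetric matrix. For 2 x 2 matrices,
  D P = P adj(D)\<^sup>T, adj is anti-multiplicative and adj(D) D = det D I; together with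
  the symmetry of \<Delta> II these give \<Delta> P adj(II)\<^sup>T \<Delta> = det \<Delta> P adj(II),
  which is the claim after multiplying by I \<Delta>\<^sup>T on the right.
*)

lemma adj2_mult: "adj2 (A ** B) = adj2 B ** adj2 A"
  unfolding vec_eq_iff forall_2 matrix_matrix_mult_def sum_2 adj2_def by (simp add: algebra_simps)

lemma adj2_transpose: "adj2 (transpose A) = transpose (adj2 A)"
  unfolding vec_eq_iff forall_2 transpose_def adj2_def by simp

lemma adj2_mult_self: "adj2 A ** A = det A *\<^sub>R mat 1"
  unfolding vec_eq_iff forall_2 matrix_matrix_mult_def sum_2 adj2_def det_2 mat_def
  by (simp add: algebra_simps)

lemma mult_Pmat: "A ** Pmat = Pmat ** transpose (adj2 A)"
  unfolding vec_eq_iff forall_2 matrix_matrix_mult_def sum_2 adj2_def Pmat_def transpose_def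
  by (simp add: algebra_simps)

lemma Pmat_adj2_conj_symmetric:
  assumes "transpose (D ** B) = D ** B"
  shows "D ** Pmat ** transpose (adj2 B) ** D = det D *\<^sub>R (Pmat ** adj2 B)"
proof -
  have "D ** Pmat ** transpose (adj2 B) ** D = Pmat ** transpose (adj2 (D ** B)) ** D"
    by (simp add: mult_Pmat adj2_mult matrix_transpose_mul matrix_mul_assoc)
  also have "\<dots> = Pmat ** adj2 B ** (adj2 D ** D)"
    by (simp only: adj2_transpose[symmetric] assms) (simp add: adj2_mult matrix_mul_assoc)
  also have "\<dots> = det D *\<^sub>R (Pmat ** adj2 B)"
    by (simp add: adj2_mult_self matrix_scalar_ac scalar_matrix_assoc)
  finally show ?thesis .
qed

lemma transpose_uminus: "transpose (- A) = - transpose (A :: 'a::ring_1^'n^'m)"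
  by (simp add: vec_eq_iff transpose_def)

lemma matrix_mul_uminus_right:
  fixes A :: "'a::ring_1^'n^'m" and B :: "'a^'k^'n"
  shows "A ** (- B) = - (A ** B)"
  by (simp add: vec_eq_iff matrix_matrix_mult_def sum_negf)

lemma has_derivative_imp_partial:
  "(f has_derivative f') (at u) \<Longrightarrow> partial f i u = f' (axis i 1)"
  unfolding partial_def by (metis frechet_derivative_at)

lemma partial_add:
  assumes "f differentiable at v" "g differentiable at v"
  shows "partial (\<lambda>w. f w + g w) i v = partial f i v + partial g i v"
  using has_derivative_imp_partial
      [OF has_derivative_add[OF assms[unfolded frechet_derivative_works]]]
  by (simp add: partial_def)

lemma partial_scaleR:
  assumes "a differentiable at v" "f differentiable at v"
  shows "partial (\<lambda>w. a w *\<^sub>R f w) i v = a v *\<^sub>R partial f i v + partial a i v *\<^sub>R f v"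
  using has_derivative_imp_partial
      [OF has_derivative_scaleR[OF assms[unfolded frechet_derivative_works]]]
  by (simp add: partial_def)

lemma partial_inner:
  assumes "f differentiable at v" "g differentiable at v"
  shows "partial (\<lambda>w. f w \<bullet> g w) i v = f v \<bullet> partial g i v + partial f i v \<bullet> g v"
  using has_derivative_imp_partial
      [OF has_derivative_inner[OF assms[unfolded frechet_derivative_works]]]
  by (simp add: partial_def)

lemma partial_eq_0_if_constant_on:
  assumes "open U" "v \<in> U" "\<And>w. w \<in> U \<Longrightarrow> f w = c"
  shows "partial f i v = 0"
proof -
  have "(f has_derivative (\<lambda>_. 0)) (at v)"
    by (rule has_derivative_transform_within_open[OF has_derivative_const assms(1,2)])
       (use assms(3) in auto)
  then show ?thesis
    by (rule has_derivative_imp_partial)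
qed

lemma has_vector_derivative_partial_line:
  fixes f :: "real^'n \<Rightarrow> 'b::real_normed_vector"
  assumes "f differentiable at (p + s *\<^sub>R axis i 1)"
  shows "((\<lambda>s. f (p + s *\<^sub>R axis i 1)) has_vector_derivative partial f i (p + s *\<^sub>R axis i 1))
           (at s within S)"
proof -
  let ?a = "axis i (1::real)"
  let ?D = "frechet_derivative f (at (p + s *\<^sub>R ?a))"
  have Df: "(f has_derivative ?D) (at (p + s *\<^sub>R ?a))"
    using assms frechet_derivative_works by blast
  have "((\<lambda>s. p + s *\<^sub>R ?a) has_derivative (\<lambda>h. h *\<^sub>R ?a)) (at s within S)"
    by (auto intro!: derivative_eq_intros)
  from has_derivative_compose[OF this Df]
  have "((\<lambda>s. f (p + s *\<^sub>R ?a)) has_derivative (\<lambda>h. h *\<^sub>R ?D ?a)) (at s within S)"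
    by (simp add: linear_scale[OF has_derivative_linear[OF Df]])
  then show ?thesis
    unfolding has_vector_derivative_def partial_def .
qed

lemma norm_diff_le_vector_derivative_bound:
  fixes \<phi> :: "real \<Rightarrow> 'b::real_normed_vector"
  assumes "a \<le> b"
    and "\<And>s. s \<in> {a..b} \<Longrightarrow> (\<phi> has_vector_derivative \<phi>' s) (at s within {a..b})"
    and "\<And>s. s \<in> {a..b} \<Longrightarrow> norm (\<phi>' s) \<le> B"
  shows "norm (\<phi> b - \<phi> a) \<le> B * (b - a)"
proof -
  have "onorm (\<lambda>h. h *\<^sub>R \<phi>' s) = norm (\<phi>' s)" for s
    using onorm_scaleR_left[OF bounded_linear_ident] by (simp add: onorm_id)
  then show ?thesis
    using differentiable_bound[of "{a..b}" \<phi> "\<lambda>s h. h *\<^sub>R \<phi>' s" B b a] assms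
    by (simp add: has_vector_derivative_def)
qed

lemma second_difference_bound:
  fixes f :: "real^'n \<Rightarrow> 'b::real_normed_vector"
  assumes "0 \<le> t"
    and square: "\<And>s \<tau>. s \<in> {0..t} \<Longrightarrow> \<tau> \<in> {0..t} \<Longrightarrow> u + s *\<^sub>R axis i 1 + \<tau> *\<^sub>R axis j 1 \<in> S"
    and f: "\<forall>v\<in>S. f differentiable at v"
    and fi: "\<forall>v\<in>S. partial f i differentiable at v"
    and fij: "\<forall>v\<in>S. norm (partial (partial f i) j v - D) \<le> \<epsilon>"
  shows "norm (f (u + t *\<^sub>R axis i 1 + t *\<^sub>R axis j 1) - f (u + t *\<^sub>R axis i 1)
                - f (u + t *\<^sub>R axis j 1) + f u - (t * t) *\<^sub>R D) \<le> \<epsilon> * t * t"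
proof -
  let ?a = "axis i (1::real)" and ?b = "axis j (1::real)"
  define g where "g s = f (u + t *\<^sub>R ?b + s *\<^sub>R ?a) - f (u + s *\<^sub>R ?a) - (s * t) *\<^sub>R D" for s
  define g' where "g' s = partial f i (u + t *\<^sub>R ?b + s *\<^sub>R ?a) - partial f i (u + s *\<^sub>R ?a) - t *\<^sub>R D"
    for s
  have "norm (g' s) \<le> \<epsilon> * t" if s: "s \<in> {0..t}" for s
  proof -
    define h where "h \<tau> = partial f i (u + s *\<^sub>R ?a + \<tau> *\<^sub>R ?b) - \<tau> *\<^sub>R D" for \<tau>
    have "(h has_vector_derivative partial (partial f i) j (u + s *\<^sub>R ?a + \<tau> *\<^sub>R ?b) - D)
        (at \<tau> within {0..t})" if "\<tau> \<in> {0..t}" for \<tau>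
      using has_vector_derivative_partial_line[of "partial f i" "u + s *\<^sub>R ?a" \<tau> j] fi square s that
      unfolding h_def by (auto intro!: derivative_eq_intros)
    from norm_diff_le_vector_derivative_bound[OF \<open>0 \<le> t\<close> this, where B = \<epsilon>]
    have "norm (h t - h 0) \<le> \<epsilon> * (t - 0)"
      using fij square s by auto
    moreover have "h t - h 0 = g' s"
      unfolding h_def g'_def by (simp add: algebra_simps)
    ultimately show ?thesis by simp
  qed
  moreover have "(g has_vector_derivative g' s) (at s within {0..t})" if "s \<in> {0..t}" for s
  proof -
    have "f differentiable at (u + t *\<^sub>R ?b + s *\<^sub>R ?a)" "f differentiable at (u + s *\<^sub>R ?a)"
      using f square[OF that, of t] square[OF that, of 0] \<open>0 \<le> t\<close> by (simp_all add: add_ac)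
    from this[THEN has_vector_derivative_partial_line] show ?thesis
      unfolding g_def g'_def by (auto intro!: derivative_eq_intros)
  qed
  ultimately have "norm (g t - g 0) \<le> \<epsilon> * t * (t - 0)"
    using norm_diff_le_vector_derivative_bound[OF \<open>0 \<le> t\<close>, of g g' "\<epsilon> * t"] by blast
  moreover have "g t - g 0 = f (u + t *\<^sub>R ?a + t *\<^sub>R ?b) - f (u + t *\<^sub>R ?a)
                - f (u + t *\<^sub>R ?b) + f u - (t * t) *\<^sub>R D"
    unfolding g_def by (simp add: algebra_simps)
  ultimately show ?thesis by simp
qed

lemma continuous_on_open_nearby_ball:
  assumes "open U" "u \<in> U" "continuous_on U g" "e > 0"
  obtains r where "r > 0" "ball u r \<subseteq> U" "\<forall>v\<in>ball u r. dist (g v) (g u) \<le> e"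
proof -
  obtain r1 where "r1 > 0" "ball u r1 \<subseteq> U"
    using assms(1,2) open_contains_ball by blast
  moreover obtain r2 where "r2 > 0" "\<forall>v. dist v u < r2 \<longrightarrow> dist (g v) (g u) < e"
    using assms by (metis continuous_on_eq_continuous_at continuous_at_eps_delta)
  ultimately show thesis
    by (intro that[of "min r1 r2"]) (auto simp: dist_commute less_imp_le)
qed

lemma second_difference_tendsto:
  fixes f :: "real^'n \<Rightarrow> 'b::real_normed_vector"
  assumes "open U" "u \<in> U"
    and f: "\<forall>v\<in>U. f differentiable at v"
    and fi: "\<forall>v\<in>U. partial f i differentiable at v"
    and fij: "continuous_on U (partial (partial f i) j)"
  shows "((\<lambda>t. (1 / t\<^sup>2) *\<^sub>R (f (u + t *\<^sub>R axis i 1 + t *\<^sub>R axis j 1) - f (u + t *\<^sub>R axis i 1)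
            - f (u + t *\<^sub>R axis j 1) + f u)) \<longlongrightarrow> partial (partial f i) j u) (at_right 0)"
proof -
  define Q where "Q t = f (u + t *\<^sub>R axis i 1 + t *\<^sub>R axis j 1) - f (u + t *\<^sub>R axis i 1)
            - f (u + t *\<^sub>R axis j 1) + f u" for t
  let ?D = "partial (partial f i) j u"
  have "((\<lambda>t. (1 / t\<^sup>2) *\<^sub>R Q t) \<longlongrightarrow> ?D) (at_right 0)"
  proof (rule tendstoI)
    fix e :: real assume "e > 0"
    obtain r where "r > 0" and ball_U: "ball u r \<subseteq> U"
      and near_D: "\<forall>v\<in>ball u r. dist (partial (partial f i) j v) ?D \<le> e / 2"
      using continuous_on_open_nearby_ball[OF assms(1,2) fij, of "e / 2"] \<open>e > 0\<close> by auto
    have "dist ((1 / t\<^sup>2) *\<^sub>R Q t) ?D < e" if t: "0 < t" "t < r / 2" for t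
    proof -
      have "u + s *\<^sub>R axis i 1 + \<tau> *\<^sub>R axis j 1 \<in> ball u r" if "s \<in> {0..t}" "\<tau> \<in> {0..t}" for s \<tau>
      proof -
        have "dist u (u + s *\<^sub>R axis i 1 + \<tau> *\<^sub>R axis j 1) \<le> s + \<tau>"
          using norm_triangle_ineq4[of "- s *\<^sub>R axis i (1::real)" "\<tau> *\<^sub>R axis j 1"] that
          by (simp add: dist_norm)
        then show ?thesis using that t by simp
      qed
      from second_difference_bound[OF less_imp_le[OF \<open>0 < t\<close>] this] ball_U f fi near_D
      have "norm (Q t - (t * t) *\<^sub>R ?D) \<le> e / 2 * t * t"
        unfolding Q_def dist_norm by blast
      then have "norm ((1 / t\<^sup>2) *\<^sub>R (Q t - (t * t) *\<^sub>R ?D)) \<le> e / 2"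
        using t by (simp only: norm_scaleR) (simp add: field_simps power2_eq_square)
      then show ?thesis
        using t \<open>e > 0\<close> by (simp add: dist_norm scaleR_diff_right power2_eq_square)
    qed
    then show "\<forall>\<^sub>F t in at_right 0. dist ((1 / t\<^sup>2) *\<^sub>R Q t) ?D < e"
      unfolding eventually_at_right_field using \<open>r > 0\<close> by (intro exI[of _ "r / 2"]) auto
  qed
  then show ?thesis
    unfolding Q_def .
qed

lemma Ck_on_2_iff:
  "Ck_on 2 f U \<longleftrightarrow> (\<forall>v\<in>U. f differentiable at v) \<and> (\<forall>i. \<forall>v\<in>U. partial f i differentiable at v)
      \<and> (\<forall>i j. continuous_on U (partial (partial f i) j))"
  by (auto simp: numeral_2_eq_2)

lemma partial_partial_commute:
  fixes f :: "real^'n \<Rightarrow> 'b::real_normed_vector"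
  assumes "open U" "u \<in> U" "Ck_on 2 f U"
  shows "partial (partial f i) j u = partial (partial f j) i u"
proof -
  have "(\<lambda>t. (1 / t\<^sup>2) *\<^sub>R (f (u + t *\<^sub>R axis j 1 + t *\<^sub>R axis i 1) - f (u + t *\<^sub>R axis j 1)
            - f (u + t *\<^sub>R axis i 1) + f u))
      = (\<lambda>t. (1 / t\<^sup>2) *\<^sub>R (f (u + t *\<^sub>R axis i 1 + t *\<^sub>R axis j 1) - f (u + t *\<^sub>R axis i 1)
            - f (u + t *\<^sub>R axis j 1) + f u))"
    by (simp add: algebra_simps)
  moreover note second_difference_tendsto[of U u f i j] second_difference_tendsto[of U u f j i]
  ultimately show ?thesis
    using assms unfolding Ck_on_2_iff by (auto intro: tendsto_unique[OF trivial_limit_at_right_real])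
qed

lemma unit_field_orthogonal_partial:
  assumes "open U" "v \<in> U" "\<forall>w\<in>U. norm (\<xi> w) = 1" "\<xi> differentiable at v"
  shows "\<xi> v \<bullet> partial \<xi> i v = 0"
proof -
  have "partial (\<lambda>w. \<xi> w \<bullet> \<xi> w) i v = 0"
    by (rule partial_eq_0_if_constant_on[OF assms(1,2), where c = 1])
       (use assms(3) in \<open>simp add: norm_eq_1\<close>)
  then show ?thesis
    using partial_inner[OF assms(4,4)] by (simp add: inner_commute)
qed

lemma normal_congruence_exact:
  assumes "open U" "smooth_on x U" "smooth_on \<xi> U" "\<forall>u\<in>U. norm (\<xi> u) = 1"
    and "normal_congruence x \<xi> U"
  obtains lam where "smooth_on lam U" "\<And>v i. v \<in> U \<Longrightarrow> \<xi> v \<bullet> partial x i v = - partial lam i v"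
proof -
  obtain lam where lam: "smooth_on lam U"
    and normal: "\<forall>v\<in>U. \<forall>i. \<xi> v \<bullet> partial (\<lambda>w. x w + lam w *\<^sub>R \<xi> w) i v = 0"
    using assms(5) unfolding normal_congruence_def by blast
  have "\<xi> v \<bullet> partial x i v = - partial lam i v" if "v \<in> U" for v i
  proof -
    have diff: "x differentiable at v" "lam differentiable at v" "\<xi> differentiable at v"
      using assms(2,3) lam that unfolding smooth_on_def by (metis Ck_on.simps(2))+
    have expand: "partial (\<lambda>w. x w + lam w *\<^sub>R \<xi> w) i v
        = partial x i v + lam v *\<^sub>R partial \<xi> i v + partial lam i v *\<^sub>R \<xi> v"
      using diff by (simp add: partial_add partial_scaleR add.assoc)
    have "\<xi> v \<bullet> (partial x i v + lam v *\<^sub>R partial \<xi> i v + partial lam i v *\<^sub>R \<xi> v) = 0"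
      using normal[rule_format, OF that, of i] unfolding expand .
    then show ?thesis
      using unit_field_orthogonal_partial[OF assms(1) that assms(4) diff(3)] assms(4) that
      by (simp add: inner_add_right norm_eq_1)
  qed
  with lam show thesis by (rule that)
qed

lemma exact_form_partials_symmetric:
  assumes "open U" "u \<in> U" "Ck_on 2 x U" "Ck_on 2 lam U" "\<forall>v\<in>U. \<xi> differentiable at v"
    and exact: "\<And>v i. v \<in> U \<Longrightarrow> \<xi> v \<bullet> partial x i v = - partial lam i v"
  shows "partial \<xi> j u \<bullet> partial x i u = partial \<xi> i u \<bullet> partial x j u"
proof -
  have diff: "\<xi> differentiable at u" "partial x i differentiable at u" "partial lam i differentiable at u"
    for i
    using assms(2-5) unfolding Ck_on_2_iff by blast+
  have mixed: "partial \<xi> j u \<bullet> partial x i u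
      = - (\<xi> u \<bullet> partial (partial x i) j u + partial (partial lam i) j u)" for i j
  proof -
    have "partial (\<lambda>v. \<xi> v \<bullet> partial x i v + partial lam i v) j u = 0"
      by (rule partial_eq_0_if_constant_on[OF assms(1,2), where c = 0]) (simp add: exact)
    then show ?thesis
      using diff by (simp add: partial_add partial_inner algebra_simps)
  qed
  show ?thesis
    using mixed[of i j] mixed[of j i]
      partial_partial_commute[OF assms(1-3)] partial_partial_commute[OF assms(1,2,4)]
    by simp
qed

lemma transpose_jac_mult_jac:
  "(transpose (jac f u) ** jac g u) $ i $ j = partial f i u \<bullet> partial g j u"
  by (simp add: matrix_matrix_mult_def transpose_def jac_def inner_vec_def)

lemma normal_congruence_jac_symmetric:
  assumes "open U" "smooth_on x U" "smooth_on \<xi> U" "\<forall>v\<in>U. norm (\<xi> v) = 1"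
    and "normal_congruence x \<xi> U" "u \<in> U"
  shows "transpose (transpose (jac \<xi> u) ** jac x u) = transpose (jac \<xi> u) ** jac x u"
proof -
  obtain lam where lam: "smooth_on lam U"
    and exact: "\<And>v i. v \<in> U \<Longrightarrow> \<xi> v \<bullet> partial x i v = - partial lam i v"
    using normal_congruence_exact[OF assms(1-5)] by blast
  have "Ck_on 2 x U" "Ck_on 2 lam U" "Ck_on 2 \<xi> U"
    using assms(2,3) lam unfolding smooth_on_def by blast+
  then have "partial \<xi> j u \<bullet> partial x i u = partial \<xi> i u \<bullet> partial x j u" for i j
    using exact_form_partials_symmetric[OF assms(1,6) _ _ _ exact] unfolding Ck_on_2_iff by blast
  then show ?thesis
    unfolding vec_eq_iff transpose_def[of "transpose (jac \<xi> u) ** jac x u"]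
    by (simp add: transpose_jac_mult_jac)
qed

theorem theorem4p1:
  fixes U :: "(real^2) set" and x \<xi> :: "real^2 \<Rightarrow> real^3"
    and \<Omega> :: "real^2 \<Rightarrow> real^2^3" and \<Delta> :: "real^2 \<Rightarrow> real^2^2"
  assumes "open U"
    and "smooth_on x U"
    and "\<forall>u\<in>U. norm (\<xi> u) = 1"
    and "proper_frontal \<xi> U"
    and "normal_congruence x \<xi> U"
    and "tangent_moving_basis \<xi> U \<Omega>"
    and "smooth_on \<Delta> U"
    and "\<forall>u\<in>U. jac \<xi> u = \<Omega> u ** transpose (\<Delta> u)"
  shows "\<forall>u\<in>U.
    \<Delta> u ** Pmat ** transpose (adj2 (second_ff \<Omega> x u)) ** \<Delta> u ** first_ff \<Omega> u ** transpose (\<Delta> u)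
    = det (\<Delta> u) *\<^sub>R (Pmat ** adj2 (second_ff \<Omega> x u) ** first_ff \<Omega> u ** transpose (\<Delta> u))"
proof
  fix u assume "u \<in> U"
  have "smooth_on \<xi> U"
    using assms(4) unfolding proper_frontal_def frontal_def by blast
  then have "transpose (transpose (jac \<xi> u) ** jac x u) = transpose (jac \<xi> u) ** jac x u"
    using normal_congruence_jac_symmetric assms(1-3,5) \<open>u \<in> U\<close> by blast
  moreover have "transpose (jac \<xi> u) ** jac x u = - (\<Delta> u ** second_ff \<Omega> x u)"
    using assms(8) \<open>u \<in> U\<close>
    by (simp add: second_ff_def matrix_mul_uminus_right matrix_transpose_mul matrix_mul_assoc)
  ultimately have "transpose (\<Delta> u ** second_ff \<Omega> x u) = \<Delta> u ** second_ff \<Omega> x u"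
    by (simp add: transpose_uminus)
  from Pmat_adj2_conj_symmetric[OF this]
  show "\<Delta> u ** Pmat ** transpose (adj2 (second_ff \<Omega> x u)) ** \<Delta> u ** first_ff \<Omega> u ** transpose (\<Delta> u)
    = det (\<Delta> u) *\<^sub>R (Pmat ** adj2 (second_ff \<Omega> x u) ** first_ff \<Omega> u ** transpose (\<Delta> u))"
    by (simp add: scalar_matrix_assoc)
qed

end
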